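(* Let $p,q\ge 0$ be integers and let $\lambda=(p+1,1^{q})$ be the hook partition (first row of length $p+1$, followed by $q$ rows of length $1$). Let $z_{-q},\dots,z_{-1},z_0,z_1,\dots,z_p\in\mathbb{C}$ with $\Re(z_k)\ge 1$ for all $-q\le k\le p$, $\Re(z_p)>1$ and $\Re(z_{-q})>1$, and let ${\pmb s}\in T(\lambda,\mathbb{C})$ be the content-parametrized tableau with first row $z_0,z_1,\dots,z_p$ and first column $z_0,z_{-1},\dots,z_{-q}$ (i.e. $s_{1,j}=z_{j-1}$ for $1\le j\le p+1$ and $s_{i,1}=z_{-(i-1)}$ for $1\le i\le q+1$). Then $$\zeta_{\lambda}({\pmb s})=\sum_{j=0}^{q}(-1)^j\,\zeta^{\star}(z_{-j},\ldots,z_{-1},z_0,z_1,\ldots,z_p)\,\zeta(z_{-j-1},\ldots,z_{-q}),$$ where $\zeta(z_{-j-1},\ldots,z_{-q})$ is interpreted as $1$ when $j=q$.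
   Context: Euler–Zagier multiple zeta-function and its star variant: $\zeta(s_1,\ldots,s_r)=\sum_{0<m_1<\cdots<m_r}m_1^{-s_1}\cdots m_r^{-s_r}$ and $\zeta^{\star}(s_1,\ldots,s_r)=\sum_{0<m_1\le\cdots\le m_r}m_1^{-s_1}\cdots m_r^{-s_r}$. For a partition $\lambda$, $T(\lambda,X)$ denotes the set of fillings of the Young diagram of $\lambda$ by elements of $X$ (entry in row $i$, column $j$ denoted by the $(i,j)$ entry), and $\mathrm{SSYT}(\lambda)$ is the set of semi-standard Young tableaux $M=(m_{ij})\in T(\lambda,\mathbb{N})$, i.e. $m_{i1}\le m_{i2}\le\cdots$ along each row and $m_{1j}<m_{2j}<\cdots$ down each column. For ${\pmb s}=(s_{ij})\in T(\lambda,\mathbb{C})$ the Schur multiple zeta-function is $\zeta_\lambda({\pmb s})=\sum_{M\in\mathrm{SSYT}(\lambda)}\prod_{(i,j)\in\lambda}m_{ij}^{-s_{ij}}$ (absolutely convergent when $\Re(s_{ij})\ge1$ for all boxes and $\Re(s_{ij})>1$ at the corners of $\lambda$). The content of box $(i,j)$ is $j-i$; "content-parametrized" means $s_{ij}=z_{j-i}$. *)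

theory Defs
  imports "HOL-Analysis.Analysis"
begin

text \<open>Euler--Zagier multiple zeta value
  zeta(s_1,...,s_r) = sum over 0 < m_1 < ... < m_r of prod m_i^(-s_i).
  Index tuples are lists; the empty list gives value 1.\<close>
definition mzeta :: "complex list \<Rightarrow> complex" where
  "mzeta s = infsum (\<lambda>m. \<Prod>i<length s. (of_nat (m ! i)) powr (- (s ! i)))
     {m :: nat list. length m = length s \<and> sorted_wrt (<) m \<and> (\<forall>x\<in>set m. 0 < x)}"

definition mzeta_star :: "complex list \<Rightarrow> complex" where
  "mzeta_star s = infsum (\<lambda>m. \<Prod>i<length s. (of_nat (m ! i)) powr (- (s ! i)))
     {m :: nat list. length m = length s \<and> sorted_wrt (\<le>) m \<and> (\<forall>x\<in>set m. 0 < x)}"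

text \<open>A partition is given as the list of its row lengths (1-indexed rows/columns).
  Young diagram: boxes (i,j) with 1 \<le> i \<le> number of rows, 1 \<le> j \<le> length of row i.\<close>
definition young_diagram :: "nat list \<Rightarrow> (nat \<times> nat) set" where
  "young_diagram lam = {(i, j). 1 \<le> i \<and> i \<le> length lam \<and> 1 \<le> j \<and> j \<le> lam ! (i - 1)}"

text \<open>Semi-standard Young tableaux of shape lam with positive integer entries;
  fillings are represented as functions that vanish outside the diagram.\<close>
definition SSYT :: "nat list \<Rightarrow> (nat \<times> nat \<Rightarrow> nat) set" where
  "SSYT lam = {M. (\<forall>b. b \<notin> young_diagram lam \<longrightarrow> M b = 0)
     \<and> (\<forall>b\<in>young_diagram lam. 0 < M b)
     \<and> (\<forall>i j. (i, j) \<in> young_diagram lam \<and> (i, Suc j) \<in> young_diagram lam \<longrightarrow> M (i, j) \<le> M (i, Suc j))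
     \<and> (\<forall>i j. (i, j) \<in> young_diagram lam \<and> (Suc i, j) \<in> young_diagram lam \<longrightarrow> M (i, j) < M (Suc i, j))}"

definition schur_zeta :: "nat list \<Rightarrow> (nat \<times> nat \<Rightarrow> complex) \<Rightarrow> complex" where
  "schur_zeta lam s = infsum (\<lambda>M. \<Prod>b\<in>young_diagram lam. (of_nat (M b)) powr (- s b)) (SSYT lam)"

definition hook :: "nat \<Rightarrow> nat \<Rightarrow> nat list" where
  "hook p q = Suc p # replicate q 1"

end

theory Submission
  imports Defs
begin

text \<open>Record a tableau of hook shape by its entries indexed by content: they weakly increase
  along the contents \<open>0, \<dots>, p\<close> of the arm and strictly increase along the leg, from content
  \<open>0\<close> down to \<open>-q\<close>. Dropping the single inequality between the contents \<open>-j-1\<close> and \<open>-j\<close>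
  makes the entries at contents \<open>-j, \<dots>, p\<close> a weak chain and those at \<open>-j-1, \<dots>, -q\<close> an
  independent strict chain, so these relaxed fillings sum to the \<open>j\<close>-th product
  \<open>\<zeta>\<^sup>\<star>(z(-j), \<dots>, z(p)) \<zeta>(z(-j-1), \<dots>, z(-q))\<close>. According to whether the dropped inequality
  fails or holds, the relaxed fillings are the fillings with corner moved to \<open>-j\<close> or to \<open>-j-1\<close>,
  so the alternating sum telescopes to the fillings with corner \<open>0\<close>: the semi-standard tableaux.\<close>

lemma has_sum_product_abs_summable:
  fixes f :: "'a \<Rightarrow> 'c::{real_normed_field,banach}" and g :: "'b \<Rightarrow> 'c"
  assumes f: "(\<lambda>x. norm (f x)) summable_on A" and g: "(\<lambda>y. norm (g y)) summable_on B"
  shows "((\<lambda>(x, y). f x * g y) has_sum (infsum f A * infsum g B)) (A \<times> B)"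
proof -
  have "(\<lambda>xy. norm (f (fst xy) * g (snd xy))) summable_on Sigma A (\<lambda>_. B)"
  proof (subst Infinite_Sum.abs_summable_on_Sigma_iff, intro conjI ballI)
    fix x assume "x \<in> A"
    show "(\<lambda>y. norm (f (fst (x, y)) * g (snd (x, y)))) summable_on B"
      using summable_on_cmult_right[OF g, of "norm (f x)"] by (simp add: norm_mult)
  next
    have "(\<lambda>x. norm (f x) * infsum (\<lambda>y. norm (g y)) B) summable_on A"
      by (rule summable_on_cmult_left[OF f])
    then show "(\<lambda>x. norm (\<Sum>\<^sub>\<infinity>y\<in>B. norm (f (fst (x, y)) * g (snd (x, y))))) summable_on A"
      by (simp add: norm_mult infsum_cmult_right' infsum_nonneg)
  qed
  then have "(\<lambda>xy. f (fst xy) * g (snd xy)) summable_on A \<times> B"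
    by (rule abs_summable_summable)
  then have summable: "(\<lambda>(x, y). f x * g y) summable_on A \<times> B"
    by (simp only: split_def)
  have "infsum (\<lambda>(x, y). f x * g y) (A \<times> B) = infsum (\<lambda>x. infsum (\<lambda>y. f x * g y) B) A"
    using infsum_Sigma'_banach[of "\<lambda>x y. f x * g y" A "\<lambda>_. B"] summable by simp
  also have "\<dots> = infsum f A * infsum g B"
    by (simp add: infsum_cmult_right' infsum_cmult_left')
  finally show ?thesis
    using summable by (metis has_sum_infsum)
qed

definition positive_lists :: "nat \<Rightarrow> nat list set" where
  "positive_lists r = {m. length m = r \<and> (\<forall>x\<in>set m. 0 < x)}"

lemma summable_on_positive_lists_powr:
  fixes a :: real
  assumes "1 < a"
  shows "(\<lambda>m. \<Prod>x\<leftarrow>m. real x powr - a) summable_on positive_lists r"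
proof (induction r)
  case 0
  have "positive_lists 0 = {[]}" by (auto simp: positive_lists_def)
  then show ?case by simp
next
  case (Suc r)
  have "summable (\<lambda>n. real n powr - a)"
    using assms by (subst summable_real_powr_iff) auto
  then have "(\<lambda>n. real n powr - a) summable_on UNIV"
    by (rule summable_nonneg_imp_summable_on) auto
  then have head: "(\<lambda>n. norm (real n powr - a)) summable_on {0<..}"
    using summable_on_subset_banach by fastforce
  have nonneg: "0 \<le> (\<Prod>x\<leftarrow>m. real x powr - a)" for m
    by (rule prod_list_nonneg) auto
  have "(\<lambda>(x, l). real x powr - a * (\<Prod>x\<leftarrow>l. real x powr - a)) summable_on {0<..} \<times> positive_lists r"
    using has_sum_product_abs_summable[OF head, of "\<lambda>l. \<Prod>x\<leftarrow>l. real x powr - a"] Suc nonneg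
    by (auto intro: has_sum_imp_summable)
  then show ?case
    by (subst summable_on_reindex_bij_witness[of "{0<..} \<times> positive_lists r"
          "\<lambda>m. (hd m, tl m)" "\<lambda>(x, l). x # l", symmetric])
       (auto simp: positive_lists_def length_Suc_conv)
qed

text \<open>The excess of the last exponent is spread evenly over all factors; this costs nothing
  because the last base is the largest.\<close>
lemma prod_powr_le_prod_powr_uniform:
  fixes x e :: "nat \<Rightarrow> real"
  assumes x1: "\<forall>i<Suc n. 1 \<le> x i" and x_max: "\<forall>i<n. x i \<le> x n"
    and e1: "\<forall>i<Suc n. 1 \<le> e i" and en: "1 < e n"
  shows "(\<Prod>i<Suc n. x i powr - e i) \<le> (\<Prod>i<Suc n. x i powr - (1 + (e n - 1) / Suc n))"
proof -
  define d where "d = (e n - 1) / Suc n"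
  have d_pos: "0 < d" using en by (simp add: d_def)
  have xn: "1 \<le> x n" using x1 by auto
  have "(\<Prod>i<Suc n. x i powr - e i) = (\<Prod>i<n. x i powr - e i) * x n powr - e n" by simp
  also have "\<dots> \<le> (\<Prod>i<n. x i powr - 1) * x n powr - e n"
  proof (rule mult_right_mono[OF prod_mono])
    fix i assume "i \<in> {..<n}"
    then have "1 \<le> x i" "1 \<le> e i" using x1 e1 by auto
    then show "0 \<le> x i powr - e i \<and> x i powr - e i \<le> x i powr - 1"
      by (intro conjI powr_mono) auto
  qed simp
  also have "x n powr - e n = x n powr - (real n * d) * x n powr - (1 + d)"
  proof -
    have "real (Suc n) * d = e n - 1" by (simp add: d_def)
    then have "e n = 1 + d + real n * d" by (simp add: algebra_simps)
    then have "- e n = - (real n * d) + - (1 + d)" by simp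
    then show ?thesis by (simp only: powr_add[symmetric])
  qed
  also have "x n powr - (real n * d) = (\<Prod>i<n. x n powr - d)"
    using xn powr_power[of "x n" "- d" n] by simp
  also have "(\<Prod>i<n. x i powr - 1) * ((\<Prod>i<n. x n powr - d) * x n powr - (1 + d))
      = (\<Prod>i<n. x i powr - 1 * x n powr - d) * x n powr - (1 + d)"
    by (simp only: prod.distrib mult.assoc)
  also have "\<dots> \<le> (\<Prod>i<n. x i powr - (1 + d)) * x n powr - (1 + d)"
  proof (rule mult_right_mono[OF prod_mono])
    fix i assume "i \<in> {..<n}"
    then have xi: "1 \<le> x i" "x i \<le> x n" using x1 x_max by auto
    have "x i powr - 1 * x n powr - d \<le> x i powr - 1 * x i powr - d"
      using xi d_pos by (intro mult_left_mono powr_mono2') auto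
    also have "\<dots> = x i powr - (1 + d)"
      by (simp only: powr_add[symmetric] minus_add add.commute)
    finally show "0 \<le> x i powr - 1 * x n powr - d \<and> x i powr - 1 * x n powr - d \<le> x i powr - (1 + d)"
      by simp
  qed simp
  also have "\<dots> = (\<Prod>i<Suc n. x i powr - (1 + d))" by simp
  finally show ?thesis by (simp add: d_def)
qed

lemma sorted_wrt_map_upto:
  assumes "transp R" and "\<And>k. a \<le> k \<Longrightarrow> k < b \<Longrightarrow> R (f k) (f (k + 1))"
  shows "sorted_wrt R (map f [a..b])"
proof -
  have "R (map f [a..b] ! i) (map f [a..b] ! Suc i)" if "Suc i < length (map f [a..b])" for i
    using that assms(2)[of "a + int i"] by (simp add: algebra_simps)
  then show ?thesis
    using assms(1) by (simp add: sorted_wrt_iff_nth_Suc_transp)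
qed

definition mzeta_term :: "complex list \<Rightarrow> nat list \<Rightarrow> complex" where
  "mzeta_term s m = (\<Prod>i<length s. of_nat (m ! i) powr - (s ! i))"

definition weak_chains :: "nat \<Rightarrow> nat list set" where
  "weak_chains r = {m. length m = r \<and> sorted_wrt (\<le>) m \<and> (\<forall>x\<in>set m. 0 < x)}"

definition strict_chains :: "nat \<Rightarrow> nat list set" where
  "strict_chains r = {m. length m = r \<and> sorted_wrt (<) m \<and> (\<forall>x\<in>set m. 0 < x)}"

lemma mzeta_eq_infsum: "mzeta s = infsum (mzeta_term s) (strict_chains (length s))"
  unfolding mzeta_def mzeta_term_def strict_chains_def by simp

lemma mzeta_star_eq_infsum: "mzeta_star s = infsum (mzeta_term s) (weak_chains (length s))"
  unfolding mzeta_star_def mzeta_term_def weak_chains_def by simp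

lemma strict_chains_subset_weak_chains: "strict_chains r \<subseteq> weak_chains r"
  by (auto simp: strict_chains_def weak_chains_def elim: sorted_wrt_mono_rel[rotated])

lemma norm_mzeta_term:
  assumes "m \<in> positive_lists (length s)"
  shows "norm (mzeta_term s m) = (\<Prod>i<length s. real (m ! i) powr - Re (s ! i))"
  unfolding mzeta_term_def prod_norm[symmetric]
proof (rule prod.cong)
  fix i assume "i \<in> {..<length s}"
  then have "0 < m ! i" using assms by (auto simp: positive_lists_def)
  then show "norm (of_nat (m ! i) powr - s ! i) = real (m ! i) powr - Re (s ! i)"
    using norm_powr_real_powr[of "of_nat (m ! i)" "- s ! i"] by simp
qed simp

lemma abs_summable_on_weak_chains:
  assumes re: "\<forall>x\<in>set s. 1 \<le> Re x" and last: "s \<noteq> [] \<Longrightarrow> 1 < Re (last s)"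
  shows "(\<lambda>m. norm (mzeta_term s m)) summable_on weak_chains (length s)"
proof (cases s rule: rev_cases)
  case Nil
  then have "weak_chains (length s) = {[]}" by (auto simp: weak_chains_def)
  then show ?thesis by simp
next
  case (snoc ys y)
  define n where "n = length ys"
  have len: "length s = Suc n" using snoc n_def by simp
  have en: "1 < Re (s ! n)" using last snoc n_def by (simp add: nth_append)
  define a where "a = 1 + (Re (s ! n) - 1) / Suc n"
  have "1 < a" using en by (simp add: a_def)
  then have dom: "(\<lambda>m. \<Prod>x\<leftarrow>m. real x powr - a) summable_on positive_lists (Suc n)"
    by (rule summable_on_positive_lists_powr)
  have sub: "weak_chains (Suc n) \<subseteq> positive_lists (Suc n)"
    by (auto simp: weak_chains_def positive_lists_def)
  show ?thesis unfolding len
  proof (rule summable_on_comparison_test[OF summable_on_subset_banach[OF dom sub]])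
    fix m assume m: "m \<in> weak_chains (Suc n)"
    then have lm: "length m = Suc n" and sorted: "sorted_wrt (\<le>) m" and pos: "\<forall>x\<in>set m. 0 < x"
      by (auto simp: weak_chains_def)
    have "norm (mzeta_term s m) = (\<Prod>i<Suc n. real (m ! i) powr - Re (s ! i))"
      using norm_mzeta_term[of m s] m sub len by auto
    also have "\<dots> \<le> (\<Prod>i<Suc n. real (m ! i) powr - a)"
      unfolding a_def
    proof (rule prod_powr_le_prod_powr_uniform)
      show "\<forall>i<Suc n. 1 \<le> real (m ! i)" using pos lm by (auto simp: Suc_le_eq nth_mem)
      show "\<forall>i<n. real (m ! i) \<le> real (m ! n)" using sorted lm by (auto simp: sorted_wrt_iff_nth_less)
      show "\<forall>i<Suc n. 1 \<le> Re (s ! i)" using re len by (auto simp: nth_mem)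
    qed (use en in auto)
    also have "\<dots> = (\<Prod>x\<leftarrow>m. real x powr - a)"
      by (simp add: prod.list_conv_set_nth lm atLeast0LessThan)
    finally show "norm (mzeta_term s m) \<le> (\<Prod>x\<leftarrow>m. real x powr - a)" .
  qed simp
qed

definition hook_weight :: "nat \<Rightarrow> nat \<Rightarrow> (int \<Rightarrow> complex) \<Rightarrow> (int \<Rightarrow> nat) \<Rightarrow> complex" where
  "hook_weight p q z f = (\<Prod>k\<in>{- int q..int p}. of_nat (f k) powr (- z k))"

text \<open>Here \<open>f k\<close> is the entry of the box of content \<open>k\<close>. In \<open>hook_fillings p q j\<close> the corner
  is moved to content \<open>-j\<close>: entries weakly increase from \<open>-j\<close> to \<open>p\<close> and strictly increase from
  \<open>-j\<close> down to \<open>-q\<close>. For \<open>j = 0\<close> these are the semi-standard tableaux.\<close>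
definition hook_fillings :: "nat \<Rightarrow> nat \<Rightarrow> nat \<Rightarrow> (int \<Rightarrow> nat) set" where
  "hook_fillings p q j = {f.
     (\<forall>k. (- int q \<le> k \<and> k \<le> int p \<longrightarrow> 0 < f k) \<and> (\<not> (- int q \<le> k \<and> k \<le> int p) \<longrightarrow> f k = 0))
     \<and> (\<forall>k. - int j \<le> k \<and> k < int p \<longrightarrow> f k \<le> f (k + 1))
     \<and> (\<forall>k. - int q \<le> k \<and> k < - int j \<longrightarrow> f (k + 1) < f k)}"

definition split_hook_fillings :: "nat \<Rightarrow> nat \<Rightarrow> nat \<Rightarrow> (int \<Rightarrow> nat) set" where
  "split_hook_fillings p q j = {f.
     (\<forall>k. (- int q \<le> k \<and> k \<le> int p \<longrightarrow> 0 < f k) \<and> (\<not> (- int q \<le> k \<and> k \<le> int p) \<longrightarrow> f k = 0))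
     \<and> (\<forall>k. - int j \<le> k \<and> k < int p \<longrightarrow> f k \<le> f (k + 1))
     \<and> (\<forall>k. - int q \<le> k \<and> k < - int j - 1 \<longrightarrow> f (k + 1) < f k)}"

lemma hook_fillings_disjoint:
  assumes "j < q"
  shows "hook_fillings p q j \<inter> hook_fillings p q (Suc j) = {}"
proof -
  have False if "f \<in> hook_fillings p q j" "f \<in> hook_fillings p q (Suc j)" for f
  proof -
    have "f (- int j - 1 + 1) < f (- int j - 1)"
      using that(1) assms unfolding hook_fillings_def by (auto dest!: spec[of _ "- int j - 1"])
    moreover have "f (- int j - 1) \<le> f (- int j - 1 + 1)"
      using that(2) assms unfolding hook_fillings_def by (auto dest!: spec[of _ "- int j - 1"])
    ultimately show False by simp
  qed
  then show ?thesis by blast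
qed

lemma split_hook_fillings_eq_Un:
  assumes "j < q"
  shows "split_hook_fillings p q j = hook_fillings p q j \<union> hook_fillings p q (Suc j)"
proof (intro equalityI subsetI)
  fix f assume f: "f \<in> split_hook_fillings p q j"
  show "f \<in> hook_fillings p q j \<union> hook_fillings p q (Suc j)"
  proof (cases "f (- int j) < f (- int j - 1)")
    case lt: True
    have "f (k + 1) < f k" if "- int q \<le> k" "k < - int j" for k
    proof (cases "k = - int j - 1")
      case False
      then show ?thesis using f that unfolding split_hook_fillings_def by auto
    qed (use lt in simp)
    then have "f \<in> hook_fillings p q j"
      using f unfolding split_hook_fillings_def hook_fillings_def by auto
    then show ?thesis by simp
  next
    case le: False
    have "f k \<le> f (k + 1)" if "- int (Suc j) \<le> k" "k < int p" for k
    proof (cases "k = - int j - 1")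
      case False
      then show ?thesis using f that unfolding split_hook_fillings_def by auto
    qed (use le in simp)
    then have "f \<in> hook_fillings p q (Suc j)"
      using f unfolding split_hook_fillings_def hook_fillings_def by auto
    then show ?thesis by simp
  qed
next
  fix f assume "f \<in> hook_fillings p q j \<union> hook_fillings p q (Suc j)"
  then show "f \<in> split_hook_fillings p q j"
    unfolding split_hook_fillings_def hook_fillings_def by auto
qed

lemma split_hook_fillings_last: "split_hook_fillings p q q = hook_fillings p q q"
  unfolding split_hook_fillings_def hook_fillings_def by auto

definition join_chains :: "nat \<Rightarrow> nat \<Rightarrow> nat \<Rightarrow> nat list \<Rightarrow> nat list \<Rightarrow> int \<Rightarrow> nat" where
  "join_chains p q j a b = (\<lambda>k. if - int j \<le> k \<and> k \<le> int p then a ! nat (k + int j)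
      else if - int q \<le> k \<and> k < - int j then b ! nat (- k - int j - 1) else 0)"

lemma join_chains_in_split_hook_fillings:
  assumes jq: "j \<le> q" and a: "a \<in> weak_chains (Suc (j + p))" and b: "b \<in> strict_chains (q - j)"
  shows "join_chains p q j a b \<in> split_hook_fillings p q j"
proof -
  from a have la: "length a = Suc (j + p)" and sa: "sorted_wrt (\<le>) a" and pa: "\<forall>x\<in>set a. 0 < x"
    by (auto simp: weak_chains_def)
  from b have lb: "length b = q - j" and sb: "sorted_wrt (<) b" and pb: "\<forall>x\<in>set b. 0 < x"
    by (auto simp: strict_chains_def)
  let ?f = "join_chains p q j a b"
  have pos: "(- int q \<le> k \<and> k \<le> int p \<longrightarrow> 0 < ?f k) \<and>
      (\<not> (- int q \<le> k \<and> k \<le> int p) \<longrightarrow> ?f k = 0)" for k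
  proof (intro conjI impI)
    assume k: "- int q \<le> k \<and> k \<le> int p"
    show "0 < ?f k"
    proof (cases "- int j \<le> k")
      case True
      then have "nat (k + int j) < length a" using la k by linarith
      then show ?thesis using pa True k unfolding join_chains_def by (auto simp: nth_mem)
    next
      case False
      then have "nat (- k - int j - 1) < length b" using lb k jq by linarith
      then show ?thesis using pb False k unfolding join_chains_def by (auto simp: nth_mem)
    qed
  next
    assume "\<not> (- int q \<le> k \<and> k \<le> int p)"
    then show "?f k = 0" using jq unfolding join_chains_def by auto
  qed
  have weak: "?f k \<le> ?f (k + 1)" if k: "- int j \<le> k" "k < int p" for k
  proof -
    have "a ! nat (k + int j) \<le> a ! nat (k + 1 + int j)"
      using sorted_wrt_nth_less[OF sa, of "nat (k + int j)" "nat (k + 1 + int j)"] la k by simp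
    then show ?thesis using k unfolding join_chains_def by auto
  qed
  have strict: "?f (k + 1) < ?f k" if k: "- int q \<le> k" "k < - int j - 1" for k
  proof -
    have "b ! nat (- (k + 1) - int j - 1) < b ! nat (- k - int j - 1)"
      using sorted_wrt_nth_less[OF sb, of "nat (- (k + 1) - int j - 1)" "nat (- k - int j - 1)"] lb k
      by simp
    then show ?thesis using k unfolding join_chains_def by auto
  qed
  show ?thesis unfolding split_hook_fillings_def using pos weak strict by blast
qed

lemma split_hook_fillings_chains:
  assumes jq: "j \<le> q" and f: "f \<in> split_hook_fillings p q j"
  shows "map f [- int j..int p] \<in> weak_chains (Suc (j + p))"
    and "map (\<lambda>k. f (- k)) [int j + 1..int q] \<in> strict_chains (q - j)"
proof -
  from f have pos: "\<And>k. - int q \<le> k \<Longrightarrow> k \<le> int p \<Longrightarrow> 0 < f k"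
    and weak: "\<And>k. - int j \<le> k \<Longrightarrow> k < int p \<Longrightarrow> f k \<le> f (k + 1)"
    and strict: "\<And>k. - int q \<le> k \<Longrightarrow> k < - int j - 1 \<Longrightarrow> f (k + 1) < f k"
    by (auto simp: split_hook_fillings_def)
  have "sorted_wrt (\<le>) (map f [- int j..int p])"
    by (rule sorted_wrt_map_upto) (auto intro: weak transpI)
  then show "map f [- int j..int p] \<in> weak_chains (Suc (j + p))"
    using pos jq by (auto simp: weak_chains_def)
  have "sorted_wrt (<) (map (\<lambda>k. f (- k)) [int j + 1..int q])"
  proof (rule sorted_wrt_map_upto)
    fix k assume "int j + 1 \<le> k" "k < int q"
    then show "f (- k) < f (- (k + 1))"
      using strict[of "- (k + 1)"] by (simp add: algebra_simps)
  qed (auto intro: transpI)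
  then show "map (\<lambda>k. f (- k)) [int j + 1..int q] \<in> strict_chains (q - j)"
    using pos jq by (auto simp: strict_chains_def)
qed

lemma map_join_chains:
  assumes jq: "j \<le> q" and la: "length a = Suc (j + p)" and lb: "length b = q - j"
  shows "map (join_chains p q j a b) [- int j..int p] = a"
    and "map (\<lambda>k. join_chains p q j a b (- k)) [int j + 1..int q] = b"
  by (rule nth_equalityI; use la lb jq in \<open>force simp: join_chains_def\<close>)+

lemma join_chains_map:
  assumes jq: "j \<le> q" and f: "f \<in> split_hook_fillings p q j"
  shows "join_chains p q j (map f [- int j..int p]) (map (\<lambda>k. f (- k)) [int j + 1..int q]) = f"
proof
  fix k
  have zero: "f k = 0" if "\<not> (- int q \<le> k \<and> k \<le> int p)"
    using f that by (auto simp: split_hook_fillings_def)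
  show "join_chains p q j (map f [- int j..int p]) (map (\<lambda>k. f (- k)) [int j + 1..int q]) k = f k"
  proof (cases "- int q \<le> k \<and> k \<le> int p")
    case True
    then show ?thesis
      using jq by (auto simp: join_chains_def)
  qed (use zero jq in \<open>auto simp: join_chains_def\<close>)
qed

lemma hook_weight_join_chains:
  assumes jq: "j \<le> q"
  shows "hook_weight p q z (join_chains p q j a b) =
    mzeta_term (map z [- int j..int p]) a * mzeta_term (map (\<lambda>k. z (- k)) [int j + 1..int q]) b"
proof -
  let ?h = "\<lambda>k. of_nat (join_chains p q j a b k) powr - z k"
  have weak_part: "mzeta_term (map z [- int j..int p]) a = prod ?h {- int j..int p}"
    unfolding mzeta_term_def
    by (rule prod.reindex_bij_witness[of _ "\<lambda>k. nat (k + int j)" "\<lambda>i. - int j + int i"])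
       (auto simp: join_chains_def)
  have strict_part: "mzeta_term (map (\<lambda>k. z (- k)) [int j + 1..int q]) b = prod ?h {- int q..- int j - 1}"
    unfolding mzeta_term_def
    by (rule prod.reindex_bij_witness[of _ "\<lambda>k. nat (- k - int j - 1)" "\<lambda>i. - (int j + 1 + int i)"])
       (use jq in \<open>auto simp: join_chains_def\<close>)
  have "{- int q..int p} = {- int q..- int j - 1} \<union> {- int j..int p}"
    using jq by auto
  then have "hook_weight p q z (join_chains p q j a b) =
      prod ?h {- int q..- int j - 1} * prod ?h {- int j..int p}"
    unfolding hook_weight_def by (simp add: prod.union_disjoint)
  then show ?thesis
    using weak_part strict_part by simp
qed

lemma has_sum_mzeta_star_mult_mzeta:
  assumes "\<forall>x\<in>set s. 1 \<le> Re x" and "s \<noteq> [] \<Longrightarrow> 1 < Re (last s)"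
    and "\<forall>x\<in>set t. 1 \<le> Re x" and "t \<noteq> [] \<Longrightarrow> 1 < Re (last t)"
  shows "((\<lambda>(a, b). mzeta_term s a * mzeta_term t b) has_sum mzeta_star s * mzeta t)
      (weak_chains (length s) \<times> strict_chains (length t))"
proof -
  have "(\<lambda>m. norm (mzeta_term s m)) summable_on weak_chains (length s)"
    using assms by (intro abs_summable_on_weak_chains)
  moreover have "(\<lambda>m. norm (mzeta_term t m)) summable_on strict_chains (length t)"
    using abs_summable_on_weak_chains[of t] assms strict_chains_subset_weak_chains
      summable_on_subset_banach by blast
  ultimately show ?thesis
    unfolding mzeta_eq_infsum mzeta_star_eq_infsum by (rule has_sum_product_abs_summable)
qed

lemma bij_betw_join_chains:
  assumes jq: "j \<le> q"
  shows "bij_betw (\<lambda>(a, b). join_chains p q j a b)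
    (weak_chains (Suc (j + p)) \<times> strict_chains (q - j)) (split_hook_fillings p q j)"
proof (rule bij_betwI[where g = "\<lambda>f. (map f [- int j..int p], map (\<lambda>k. f (- k)) [int j + 1..int q])"])
  show "(\<lambda>(a, b). join_chains p q j a b)
      \<in> weak_chains (Suc (j + p)) \<times> strict_chains (q - j) \<rightarrow> split_hook_fillings p q j"
    using join_chains_in_split_hook_fillings[OF jq] by auto
  show "(\<lambda>f. (map f [- int j..int p], map (\<lambda>k. f (- k)) [int j + 1..int q]))
      \<in> split_hook_fillings p q j \<rightarrow> weak_chains (Suc (j + p)) \<times> strict_chains (q - j)"
    using split_hook_fillings_chains[OF jq] by auto
next
  fix ab assume "ab \<in> weak_chains (Suc (j + p)) \<times> strict_chains (q - j)"
  then show "(\<lambda>f. (map f [- int j..int p], map (\<lambda>k. f (- k)) [int j + 1..int q]))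
      ((\<lambda>(a, b). join_chains p q j a b) ab) = ab"
    using map_join_chains[OF jq] by (auto simp: weak_chains_def strict_chains_def)
next
  fix f assume "f \<in> split_hook_fillings p q j"
  then show "(\<lambda>(a, b). join_chains p q j a b)
      (map f [- int j..int p], map (\<lambda>k. f (- k)) [int j + 1..int q]) = f"
    using join_chains_map[OF jq] by simp
qed

lemma has_sum_split_hook_fillings:
  assumes jq: "j \<le> q" and re: "\<forall>k. - int q \<le> k \<and> k \<le> int p \<longrightarrow> 1 \<le> Re (z k)"
    and zp: "1 < Re (z (int p))" and zq: "1 < Re (z (- int q))"
  shows "(hook_weight p q z has_sum
      mzeta_star (map z [- int j..int p]) * mzeta (map (\<lambda>k. z (- k)) [int j + 1..int q]))
      (split_hook_fillings p q j)"
proof -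
  define s where "s = map z [- int j..int p]"
  define t where "t = map (\<lambda>k. z (- k)) [int j + 1..int q]"
  have ls: "length s = Suc (j + p)" and lt: "length t = q - j"
    using jq by (simp_all add: s_def t_def)
  have "((\<lambda>(a, b). mzeta_term s a * mzeta_term t b) has_sum mzeta_star s * mzeta t)
      (weak_chains (length s) \<times> strict_chains (length t))"
  proof (rule has_sum_mzeta_star_mult_mzeta)
    show "\<forall>x\<in>set s. 1 \<le> Re x" "\<forall>x\<in>set t. 1 \<le> Re x"
      using re jq by (auto simp: s_def t_def)
    show "1 < Re (last s)"
      using zp ls last_conv_nth[of s] by (auto simp: s_def)
    show "1 < Re (last t)" if "t \<noteq> []"
      using zq that lt last_conv_nth[of t] by (auto simp: t_def)
  qed
  also have "?this \<longleftrightarrow> ((\<lambda>ab. hook_weight p q z ((\<lambda>(a, b). join_chains p q j a b) ab)) has_sum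
      mzeta_star s * mzeta t) (weak_chains (Suc (j + p)) \<times> strict_chains (q - j))"
    unfolding ls lt
    by (rule has_sum_cong)
       (simp add: case_prod_beta hook_weight_join_chains jq s_def t_def)
  also have "\<dots> \<longleftrightarrow> (hook_weight p q z has_sum mzeta_star s * mzeta t) (split_hook_fillings p q j)"
    by (rule has_sum_reindex_bij_betw[OF bij_betw_join_chains[OF jq]])
  finally show ?thesis by (simp add: s_def t_def)
qed

lemma young_diagram_hook: "(i, j) \<in> young_diagram (hook p q) \<longleftrightarrow>
   (i = 1 \<and> 1 \<le> j \<and> j \<le> Suc p) \<or> (j = 1 \<and> 2 \<le> i \<and> i \<le> Suc q)"
proof (cases i)
  case 0
  then show ?thesis by (simp add: young_diagram_def hook_def)
next
  case (Suc i')
  then show ?thesis by (cases i') (auto simp: young_diagram_def hook_def nth_Cons')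
qed

text \<open>The box of content \<open>k\<close> in every hook. For \<open>k\<close> outside \<open>[-q, p]\<close> it lies outside
  \<open>hook p q\<close>, so \<open>M \<circ> hook_box\<close> inherits from a tableau \<open>M\<close> its vanishing outside the diagram.\<close>
definition hook_box :: "int \<Rightarrow> nat \<times> nat" where
  "hook_box k = (if 0 \<le> k then (1, nat k + 1) else (nat (1 - k), 1))"

lemma hook_box_in_young_diagram_iff:
  "hook_box k \<in> young_diagram (hook p q) \<longleftrightarrow> - int q \<le> k \<and> k \<le> int p"
  by (auto simp: hook_box_def young_diagram_hook)

lemma hook_box_content: "(\<lambda>(i, j). int j - int i) (hook_box k) = k"
  by (simp add: hook_box_def)

lemma hook_box_of_content:
  "b \<in> young_diagram (hook p q) \<Longrightarrow> hook_box ((\<lambda>(i, j). int j - int i) b) = b"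
  by (cases b) (auto simp: hook_box_def young_diagram_hook)

lemma bij_betw_hook_box: "bij_betw hook_box {- int q..int p} (young_diagram (hook p q))"
  by (rule bij_betwI[where g = "\<lambda>(i, j). int j - int i"])
     (auto simp: hook_box_in_young_diagram_iff hook_box_content hook_box_of_content young_diagram_hook)

lemma comp_hook_box_in_hook_fillings:
  assumes M: "M \<in> SSYT (hook p q)"
  shows "M \<circ> hook_box \<in> hook_fillings p q 0"
proof -
  have "(- int q \<le> k \<and> k \<le> int p \<longrightarrow> 0 < M (hook_box k)) \<and>
      (\<not> (- int q \<le> k \<and> k \<le> int p) \<longrightarrow> M (hook_box k) = 0)" for k
    using M hook_box_in_young_diagram_iff[of k p q] unfolding SSYT_def by blast
  moreover have "M (hook_box k) \<le> M (hook_box (k + 1))" if "0 \<le> k" "k < int p" for k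
  proof -
    have "hook_box k = (1, Suc (nat k))" "hook_box (k + 1) = (1, Suc (Suc (nat k)))"
      using that by (auto simp: hook_box_def)
    moreover have "(1, Suc (nat k)) \<in> young_diagram (hook p q)" "(1, Suc (Suc (nat k))) \<in> young_diagram (hook p q)"
      using that by (auto simp: young_diagram_hook)
    ultimately show ?thesis
      using M unfolding SSYT_def by auto
  qed
  moreover have "M (hook_box (k + 1)) < M (hook_box k)" if "- int q \<le> k" "k < 0" for k
  proof -
    have "hook_box (k + 1) = (nat (- k), 1)" "hook_box k = (Suc (nat (- k)), 1)"
      using that by (auto simp: hook_box_def)
    moreover have "(nat (- k), 1) \<in> young_diagram (hook p q)" "(Suc (nat (- k)), 1) \<in> young_diagram (hook p q)"
      using that by (auto simp: young_diagram_hook)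
    ultimately show ?thesis
      using M unfolding SSYT_def by auto
  qed
  ultimately show ?thesis
    by (auto simp: hook_fillings_def)
qed

definition tableau_of_filling :: "nat \<Rightarrow> nat \<Rightarrow> (int \<Rightarrow> nat) \<Rightarrow> nat \<times> nat \<Rightarrow> nat" where
  "tableau_of_filling p q f =
    (\<lambda>(i, j). if (i, j) \<in> young_diagram (hook p q) then f (int j - int i) else 0)"

lemma tableau_of_filling_in_SSYT:
  assumes f: "f \<in> hook_fillings p q 0"
  shows "tableau_of_filling p q f \<in> SSYT (hook p q)"
proof -
  from f have pos: "\<And>k. - int q \<le> k \<Longrightarrow> k \<le> int p \<Longrightarrow> 0 < f k"
    and weak: "\<And>k. 0 \<le> k \<Longrightarrow> k < int p \<Longrightarrow> f k \<le> f (k + 1)"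
    and strict: "\<And>k. - int q \<le> k \<Longrightarrow> k < 0 \<Longrightarrow> f (k + 1) < f k"
    by (auto simp: hook_fillings_def)
  show ?thesis unfolding SSYT_def
  proof (intro CollectI conjI allI impI ballI)
    fix b assume "b \<notin> young_diagram (hook p q)"
    then show "tableau_of_filling p q f b = 0"
      by (auto simp: tableau_of_filling_def split: prod.splits)
  next
    fix b assume "b \<in> young_diagram (hook p q)"
    then show "0 < tableau_of_filling p q f b"
      using pos by (cases b) (auto simp: tableau_of_filling_def young_diagram_hook)
  next
    fix i j assume "(i, j) \<in> young_diagram (hook p q) \<and> (i, Suc j) \<in> young_diagram (hook p q)"
    then show "tableau_of_filling p q f (i, j) \<le> tableau_of_filling p q f (i, Suc j)"
      using weak[of "int j - 1"] by (auto simp: tableau_of_filling_def young_diagram_hook)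
  next
    fix i j assume "(i, j) \<in> young_diagram (hook p q) \<and> (Suc i, j) \<in> young_diagram (hook p q)"
    then show "tableau_of_filling p q f (i, j) < tableau_of_filling p q f (Suc i, j)"
      using strict[of "- int i"] by (auto simp: tableau_of_filling_def young_diagram_hook algebra_simps)
  qed
qed

lemma tableau_of_filling_comp_hook_box:
  assumes "M \<in> SSYT (hook p q)"
  shows "tableau_of_filling p q (M \<circ> hook_box) = M"
proof
  fix b
  show "tableau_of_filling p q (M \<circ> hook_box) b = M b"
    using assms hook_box_of_content[of b p q]
    by (cases b) (auto simp: tableau_of_filling_def SSYT_def)
qed

lemma comp_hook_box_tableau_of_filling:
  assumes "f \<in> hook_fillings p q 0"
  shows "tableau_of_filling p q f \<circ> hook_box = f"
proof
  fix k
  show "(tableau_of_filling p q f \<circ> hook_box) k = f k"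
    using assms hook_box_in_young_diagram_iff[of k p q] hook_box_content[of k]
    by (auto simp: tableau_of_filling_def hook_fillings_def split: prod.splits)
qed

lemma hook_weight_comp_hook_box:
  "hook_weight p q z (M \<circ> hook_box) =
    (\<Prod>b\<in>young_diagram (hook p q). of_nat (M b) powr - (\<lambda>(i, j). z (int j - int i)) b)"
proof -
  have "(\<lambda>(i, j). z (int j - int i)) (hook_box k) = z k" for k
    using hook_box_content[of k] by (simp add: split_beta)
  then show ?thesis
    using prod.reindex_bij_betw[OF bij_betw_hook_box, of "\<lambda>b. of_nat (M b) powr - (\<lambda>(i, j). z (int j - int i)) b"]
    by (simp add: hook_weight_def)
qed

lemma schur_zeta_hook_eq_infsum:
  "schur_zeta (hook p q) (\<lambda>(i, j). z (int j - int i)) = infsum (hook_weight p q z) (hook_fillings p q 0)"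
  unfolding schur_zeta_def
  by (rule infsum_reindex_bij_witness[of _ "tableau_of_filling p q" "\<lambda>M. M \<circ> hook_box"])
     (simp_all add: tableau_of_filling_comp_hook_box comp_hook_box_in_hook_fillings hook_weight_comp_hook_box
       comp_hook_box_tableau_of_filling tableau_of_filling_in_SSYT)

lemma has_sum_Un_disjoint_eq_infsum_add:
  fixes f :: "'a \<Rightarrow> 'b::banach"
  assumes sum: "(f has_sum s) (A \<union> B)" and disjoint: "A \<inter> B = {}"
  shows "s = infsum f A + infsum f B"
proof -
  have "f summable_on A" "f summable_on B"
    using has_sum_imp_summable[OF sum] summable_on_subset_banach by blast+
  then have "infsum f (A \<union> B) = infsum f A + infsum f B"
    using disjoint by (rule infsum_Un_disjoint)
  then show ?thesis
    using sum by (simp add: infsumI)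
qed

lemma sum_alternating_telescope:
  fixes c T :: "nat \<Rightarrow> 'a::comm_ring_1"
  assumes "\<And>j. j < q \<Longrightarrow> T j = c j + c (Suc j)" and "T q = c q"
  shows "(\<Sum>j = 0..q. (-1) ^ j * T j) = c 0"
proof -
  have "(\<Sum>j<n. (-1) ^ j * (c j + c (Suc j))) = c 0 - (-1) ^ n * c n" for n
    by (induction n) (auto simp: algebra_simps)
  moreover have "(\<Sum>j = 0..q. (-1) ^ j * T j) = (\<Sum>j<q. (-1) ^ j * (c j + c (Suc j))) + (-1) ^ q * c q"
    using assms by (simp add: atLeast0AtMost lessThan_Suc_atMost[symmetric])
  ultimately show ?thesis by simp
qed

theorem theorem3p1:
  fixes p q :: nat and z :: "int \<Rightarrow> complex"
  assumes "\<forall>k. - int q \<le> k \<and> k \<le> int p \<longrightarrow> 1 \<le> Re (z k)"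
    and "1 < Re (z (int p))"
    and "1 < Re (z (- int q))"
  shows "schur_zeta (hook p q) (\<lambda>(i, j). z (int j - int i)) =
    (\<Sum>j = 0..q. (-1) ^ j * mzeta_star (map z [- int j..int p])
                  * mzeta (map (\<lambda>k. z (- k)) [int j + 1..int q]))"
proof -
  define T where "T j = mzeta_star (map z [- int j..int p]) * mzeta (map (\<lambda>k. z (- k)) [int j + 1..int q])" for j
  define c where "c j = infsum (hook_weight p q z) (hook_fillings p q j)" for j
  have split_sum: "(hook_weight p q z has_sum T j) (split_hook_fillings p q j)" if "j \<le> q" for j
    unfolding T_def using has_sum_split_hook_fillings[OF that] assms by blast
  have "T j = c j + c (Suc j)" if "j < q" for j
    using split_sum[of j] that hook_fillings_disjoint[OF that]
    by (simp add: split_hook_fillings_eq_Un c_def has_sum_Un_disjoint_eq_infsum_add)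
  moreover have "T q = c q"
    using split_sum[of q] by (simp add: split_hook_fillings_last c_def infsumI)
  ultimately have "(\<Sum>j = 0..q. (-1) ^ j * T j) = c 0"
    by (rule sum_alternating_telescope)
  then show ?thesis
    by (simp add: schur_zeta_hook_eq_infsum T_def c_def mult.assoc)
qed

end
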